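(* Let $\mathcal{Q}\subset\mathbb{R}^n$ be compact and let $(\mathcal{E},\mathcal{D})$ be a compression code for $\mathcal{Q}$ operating at rate $r$ and distortion $\delta$, with codebook $\mathcal{C}$. Let $\eta>1$ and let the number of measurements be $d=\eta r/\log_2(1/({\rm e}\delta))$. Let $A\in\mathbb{R}^{d\times n}$ have i.i.d. $\mathcal{N}(0,1)$ entries. For ${\bf x}_o\in\mathcal{Q}$, let $\hat{{\bf x}}_o$ be any element of $\arg\min_{{\bf c}\in\mathcal{C}}\|A{\bf x}_o-A{\bf c}\|_2^2$. Given $\epsilon>0$, suppose $\delta$ is such that $\frac{\eta}{\log\frac{1}{{\rm e}\delta}}<\epsilon$. Then for every ${\bf x}_o\in\mathcal{Q}$, \[ \mathbb{P}\big(\|\hat{{\bf x}}_o-{\bf x}_o\|_2\ge\theta\,\delta^{1-(1+\epsilon)/\eta}\big)\le{\rm e}^{-0.8d}+{\rm e}^{-0.3\epsilon r}, \] where $\theta=2{\rm e}^{-(1+\epsilon)/\eta}$.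
   Context: A compression code $(\mathcal{E},\mathcal{D})$ for $\mathcal{Q}$ at rate $r$ consists of an encoder $\mathcal{E}:\mathcal{Q}\to\{1,2,\dots,2^r\}$ and a decoder $\mathcal{D}:\{1,\dots,2^r\}\to\mathbb{R}^n$; its codebook is $\mathcal{C}=\{\mathcal{D}(\mathcal{E}({\bf x})):{\bf x}\in\mathcal{Q}\}$, and its distortion is $\delta=\sup_{{\bf x}\in\mathcal{Q}}\|{\bf x}-\mathcal{D}(\mathcal{E}({\bf x}))\|_2$. $\log$ is the natural logarithm, $\log_2$ the base-2 logarithm, ${\rm e}$ Euler's number. The probability is over $A$. *)

theory Defs
  imports "HOL-Probability.Probability"
begin

definition std_gauss :: "real measure" where
  "std_gauss = density lborel std_normal_density"

text \<open>Distribution of a d x n matrix with i.i.d. N(0,1) entries; a matrix is a function on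
  index pairs (i,j) with i < d (row) and j :: 'n (column), extensional outside.\<close>
definition gauss_matrix :: "nat \<Rightarrow> (nat \<times> 'n::finite \<Rightarrow> real) measure" where
  "gauss_matrix d = PiM ({..<d} \<times> UNIV) (\<lambda>_. std_gauss)"

definition mat_vec_norm :: "nat \<Rightarrow> (nat \<times> 'n::finite \<Rightarrow> real) \<Rightarrow> real ^ 'n \<Rightarrow> real" where
  "mat_vec_norm d A x = sqrt (\<Sum>i<d. (\<Sum>j\<in>UNIV. A (i, j) * x $ j)\<^sup>2)"

definition is_compression_code ::
  "(real ^ 'n) set \<Rightarrow> nat \<Rightarrow> (real ^ 'n \<Rightarrow> nat) \<Rightarrow> (nat \<Rightarrow> real ^ 'n) \<Rightarrow> bool" where
  "is_compression_code Q r E D \<longleftrightarrow> (\<forall>x\<in>Q. E x \<in> {1..2^r})"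

definition codebook :: "(real ^ 'n) set \<Rightarrow> (real ^ 'n \<Rightarrow> nat) \<Rightarrow> (nat \<Rightarrow> real ^ 'n) \<Rightarrow> (real ^ 'n) set" where
  "codebook Q E D = (\<lambda>x. D (E x)) ` Q"

definition distortion :: "(real ^ 'n) set \<Rightarrow> (real ^ 'n \<Rightarrow> nat) \<Rightarrow> (nat \<Rightarrow> real ^ 'n) \<Rightarrow> real" where
  "distortion Q E D = (SUP x\<in>Q. norm (x - D (E x)))"

definition argmin_set :: "nat \<Rightarrow> (nat \<times> 'n::finite \<Rightarrow> real) \<Rightarrow> (real ^ 'n) set \<Rightarrow> real ^ 'n \<Rightarrow> (real ^ 'n) set" where
  "argmin_set d A C xo = {c \<in> C. \<forall>c'\<in>C. (mat_vec_norm d A (xo - c))\<^sup>2 \<le> (mat_vec_norm d A (xo - c'))\<^sup>2}"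

end

theory Submission
  imports Defs
begin

(* For a Gaussian matrix A with d rows, |A u|^2 / |u|^2 is chi-square with d degrees of freedom;
   its moment generating function (1 - 2 l)^(-d/2) yields Chernoff bounds for both tails.
   The codeword c0 = D (E xo) lies within delta of xo, so a minimiser at distance at least rho
   exists only if |A (xo - c0)|^2 > 4 delta^2 d (upper tail, probability at most e^(-0.8 d)) or
   some codeword c with |xo - c| >= rho has |A (xo - c)|^2 <= 4 delta^2 d (lower tail, probability
   at most (4 e delta^2 / rho^2)^(d/2)). A union bound over the at most 2^r codewords and the
   choice of rho and d turn the second term into 2^(-eps r) e^(d/2) <= e^(-0.3 eps r), because the
   hypothesis on eps says d <= eps r ln 2. *)

lemma prob_space_std_gauss: "prob_space std_gauss"
  unfolding std_gauss_def by (rule prob_space_normal_density) simp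

lemma sets_std_gauss [simp, measurable_cong]: "sets std_gauss = sets borel"
  unfolding std_gauss_def by simp

lemma prob_space_gauss_matrix: "prob_space (gauss_matrix d)"
  unfolding gauss_matrix_def by (intro prob_space_PiM prob_space_std_gauss)

lemma sets_gauss_matrix [measurable_cong]:
  "sets (gauss_matrix d) = sets (PiM ({..<d} \<times> UNIV) (\<lambda>_. borel))"
  unfolding gauss_matrix_def by (intro sets_PiM_cong) auto

lemma indep_vars_PiM_components:
  assumes "finite I" and "\<And>i. i \<in> I \<Longrightarrow> prob_space (M i)"
  shows "prob_space.indep_vars (PiM I M) M (\<lambda>i x. x i) I"
proof -
  interpret P: prob_space "PiM I M" by (intro prob_space_PiM assms)
  show ?thesis
  proof (cases "I = {}")
    case True
    then show ?thesis unfolding P.indep_vars_def P.indep_sets_def by simp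
  next
    case False
    have distr_component: "distr (PiM I M) (M i) (\<lambda>x. x i) = M i" if "i \<in> I" for i
      using that by (intro distr_PiM_component) (auto intro: assms)
    have "distr (PiM I M) (PiM I M) (\<lambda>x. \<lambda>i\<in>I. x i) = PiM I M"
      by (subst distr_cong[OF refl refl, of _ _ "\<lambda>x. x"]) (auto simp: space_PiM distr_id)
    also have "\<dots> = PiM I (\<lambda>i. distr (PiM I M) (M i) (\<lambda>x. x i))"
      by (intro PiM_cong) (auto simp: distr_component)
    finally show ?thesis
      by (subst P.indep_vars_iff_distr_eq_PiM'[OF False]) auto
  qed
qed

lemma distributed_std_gauss_component:
  assumes "j \<in> I"
  shows "distributed (PiM I (\<lambda>_. std_gauss)) lborel (\<lambda>x. x j) std_normal_density"
proof -
  have "distr (PiM I (\<lambda>_. std_gauss)) lborel (\<lambda>x. x j) = distr (PiM I (\<lambda>_. std_gauss)) std_gauss (\<lambda>x. x j)"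
    by (rule distr_cong) auto
  also have "\<dots> = std_gauss"
    using assms by (intro distr_PiM_component) (auto simp: prob_space_std_gauss)
  finally show ?thesis
    using assms unfolding distributed_def std_gauss_def
    by (auto simp flip: sets_lborel std_gauss_def intro: measurable_component_singleton)
qed

lemma distributed_std_gauss_inner:
  fixes u :: "real ^ 'n"
  assumes "u \<noteq> 0"
  shows "distributed (PiM UNIV (\<lambda>_::'n. std_gauss)) lborel (\<lambda>x. \<Sum>j\<in>UNIV. x j * u $ j)
           (normal_density 0 (norm u))"
proof -
  interpret P: prob_space "PiM UNIV (\<lambda>_::'n. std_gauss)"
    by (intro prob_space_PiM prob_space_std_gauss)
  define J where "J = {j. u $ j \<noteq> 0}"
  have "J \<noteq> {}" using assms by (auto simp: J_def vec_eq_iff)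
  have "P.indep_vars (\<lambda>_. std_gauss) (\<lambda>j x. x j) J"
    by (intro P.indep_vars_subset[OF indep_vars_PiM_components]) (auto simp: prob_space_std_gauss)
  then have indep: "P.indep_vars (\<lambda>_. borel) (\<lambda>j x. x j * u $ j) J"
    by (rule P.indep_vars_compose2) auto
  have summand: "distributed (PiM UNIV (\<lambda>_. std_gauss)) lborel (\<lambda>x. x j * u $ j)
      (normal_density 0 \<bar>u $ j\<bar>)" if "j \<in> J" for j
    using P.normal_density_affine[OF distributed_std_gauss_component[of j UNIV], where \<alpha>="u $ j" and \<beta>=0] that
    by (simp add: J_def mult.commute)
  have "(\<lambda>x. \<Sum>j\<in>J. x j * u $ j) = (\<lambda>x. \<Sum>j\<in>UNIV. x j * u $ j)"
    by (intro ext sum.mono_neutral_left) (auto simp: J_def)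
  moreover have "sqrt (\<Sum>j\<in>J. \<bar>u $ j\<bar>\<^sup>2) = norm u"
    unfolding norm_vec_def L2_set_def
    by (auto intro!: arg_cong[where f=sqrt] sum.mono_neutral_left simp: J_def)
  moreover have "distributed (PiM UNIV (\<lambda>_. std_gauss)) lborel (\<lambda>x. \<Sum>j\<in>J. x j * u $ j)
      (normal_density (\<Sum>j\<in>J. 0) (sqrt (\<Sum>j\<in>J. \<bar>u $ j\<bar>\<^sup>2)))"
    by (rule P.sum_indep_normal[OF _ \<open>J \<noteq> {}\<close> indep _ summand]) (auto simp: J_def)
  ultimately show ?thesis by simp
qed

lemma nn_integral_normal_density_exp_square:
  assumes "s > 0" and "2 * l * s\<^sup>2 < 1"
  shows "(\<integral>\<^sup>+y. ennreal (normal_density 0 s y) * ennreal (exp (l * y\<^sup>2)) \<partial>lborel)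
           = ennreal (1 / sqrt (1 - 2 * l * s\<^sup>2))"
proof -
  define q where "q = 1 - 2 * l * s\<^sup>2"
  have q: "q > 0" using assms(2) by (simp add: q_def)
  define s' where "s' = s / sqrt q"
  have density_eq: "normal_density 0 s y * exp (l * y\<^sup>2) = 1 / sqrt q * normal_density 0 s' y" for y
  proof -
    have s'_sq: "s'\<^sup>2 = s\<^sup>2 / q" using q by (simp add: s'_def power_divide)
    have "- (y - 0)\<^sup>2 / (2 * s'\<^sup>2) = - y\<^sup>2 * q / (2 * s\<^sup>2)"
      unfolding s'_sq using q assms(1) by (simp add: field_simps)
    moreover have "sqrt (2 * pi * s'\<^sup>2) = sqrt (2 * pi * s\<^sup>2) / sqrt q"
      unfolding s'_sq using q by (simp add: real_sqrt_divide)
    ultimately have "normal_density 0 s' y = sqrt q / sqrt (2 * pi * s\<^sup>2) * exp (- y\<^sup>2 * q / (2 * s\<^sup>2))"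
      unfolding normal_density_def using q by simp
    also have "- y\<^sup>2 * q / (2 * s\<^sup>2) = - y\<^sup>2 / (2 * s\<^sup>2) + l * y\<^sup>2"
      using assms(1) by (simp add: q_def field_simps)
    finally show ?thesis
      using q by (simp add: normal_density_def mult_exp_exp)
  qed
  have "(\<integral>\<^sup>+y. ennreal (normal_density 0 s y) * ennreal (exp (l * y\<^sup>2)) \<partial>lborel)
      = (\<integral>\<^sup>+y. ennreal (1 / sqrt q) * ennreal (normal_density 0 s' y) \<partial>lborel)"
    by (intro nn_integral_cong) (metis density_eq ennreal_mult' ennreal_mult'' normal_density_nonneg exp_ge_zero)
  also have "\<dots> = ennreal (1 / sqrt q) * (\<integral>\<^sup>+y. ennreal (normal_density 0 s' y) \<partial>lborel)"
    by (rule nn_integral_cmult) simp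
  also have "(\<integral>\<^sup>+y. ennreal (normal_density 0 s' y) \<partial>lborel) = 1"
    using q assms(1) by (subst nn_integral_eq_integral) (auto simp: s'_def normal_density_nonneg)
  finally show ?thesis by (simp add: q_def)
qed

definition mat_vec_sqnorm :: "nat \<Rightarrow> (nat \<times> 'n::finite \<Rightarrow> real) \<Rightarrow> real ^ 'n \<Rightarrow> real" where
  "mat_vec_sqnorm d A x = (\<Sum>i<d. (\<Sum>j\<in>UNIV. A (i, j) * x $ j)\<^sup>2)"

lemma mat_vec_norm_sq: "(mat_vec_norm d A x)\<^sup>2 = mat_vec_sqnorm d A x"
  unfolding mat_vec_norm_def mat_vec_sqnorm_def by (simp add: sum_nonneg)

lemma mat_vec_sqnorm_zero [simp]: "mat_vec_sqnorm d A 0 = 0"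
  by (simp add: mat_vec_sqnorm_def)

lemma borel_measurable_mat_vec_sqnorm [measurable]:
  "(\<lambda>A. mat_vec_sqnorm d A x) \<in> borel_measurable (gauss_matrix d)"
  unfolding mat_vec_sqnorm_def by measurable

lemma distr_gauss_matrix_row:
  assumes "i < d"
  shows "distr (gauss_matrix d) (PiM UNIV (\<lambda>_. std_gauss)) (\<lambda>A. \<lambda>j\<in>UNIV. A (i, j))
           = PiM (UNIV :: 'n::finite set) (\<lambda>_. std_gauss)"
  using distr_PiM_reindex[of "{..<d} \<times> UNIV" "\<lambda>_. std_gauss" "\<lambda>j. (i, j)" UNIV] assms
  by (auto simp: gauss_matrix_def prob_space_std_gauss inj_on_def)

lemma indep_vars_gauss_matrix_rows:
  "prob_space.indep_vars (gauss_matrix d :: (nat \<times> 'n::finite \<Rightarrow> real) measure) (\<lambda>_. PiM UNIV (\<lambda>_. borel))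
     (\<lambda>i A. \<lambda>j\<in>UNIV. A (i, j)) {..<d :: nat}"
proof -
  let ?K = "{..<d} \<times> (UNIV :: 'n set)"
  interpret P: prob_space "gauss_matrix d :: (nat \<times> 'n \<Rightarrow> real) measure"
    by (rule prob_space_gauss_matrix)
  have "P.indep_vars (\<lambda>_. std_gauss) (\<lambda>k A. A k) ?K"
    unfolding gauss_matrix_def by (intro indep_vars_PiM_components prob_space_std_gauss) auto
  then have "P.indep_vars (\<lambda>i. PiM ({i} \<times> UNIV) (\<lambda>_. std_gauss))
      (\<lambda>i A. restrict A ({i} \<times> UNIV)) {..<d}"
    by (intro P.indep_vars_restrict[where K="\<lambda>i. {i} \<times> UNIV", simplified])
       (auto simp: disjoint_family_on_def)
  then have "P.indep_vars (\<lambda>_. PiM UNIV (\<lambda>_. borel))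
      (\<lambda>i A. (\<lambda>B. \<lambda>j\<in>UNIV. B (i, j)) (restrict A ({i} \<times> UNIV))) {..<d}"
    by (rule P.indep_vars_compose2) measurable
  then show ?thesis by simp
qed

lemma nn_integral_gauss_matrix_row_exp_square:
  fixes u :: "real ^ 'n"
  assumes "u \<noteq> 0" and "2 * l * (norm u)\<^sup>2 < 1" and "i < d"
  shows "(\<integral>\<^sup>+A. ennreal (exp (l * (\<Sum>j\<in>UNIV. A (i, j) * u $ j)\<^sup>2)) \<partial>gauss_matrix d)
           = ennreal (1 / sqrt (1 - 2 * l * (norm u)\<^sup>2))"
proof -
  let ?G = "PiM (UNIV :: 'n set) (\<lambda>_. std_gauss)"
  let ?g = "\<lambda>x::'n \<Rightarrow> real. ennreal (exp (l * (\<Sum>j\<in>UNIV. x j * u $ j)\<^sup>2))"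
  have row [measurable]: "(\<lambda>A. \<lambda>j\<in>UNIV. A (i, j)) \<in> measurable (gauss_matrix d) ?G"
    using assms(3) unfolding gauss_matrix_def by (measurable; simp)
  have "(\<integral>\<^sup>+A. ennreal (exp (l * (\<Sum>j\<in>UNIV. A (i, j) * u $ j)\<^sup>2)) \<partial>gauss_matrix d)
      = (\<integral>\<^sup>+A. ?g (\<lambda>j\<in>UNIV. A (i, j)) \<partial>gauss_matrix d)"
    by simp
  also have "\<dots> = (\<integral>\<^sup>+x. ?g x \<partial>distr (gauss_matrix d) ?G (\<lambda>A. \<lambda>j\<in>UNIV. A (i, j)))"
    by (rule nn_integral_distr[symmetric]) measurable
  also have "\<dots> = (\<integral>\<^sup>+x. ?g x \<partial>?G)"
    by (simp only: distr_gauss_matrix_row[OF assms(3)])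
  also have "\<dots> = (\<integral>\<^sup>+y. ennreal (normal_density 0 (norm u) y) * ennreal (exp (l * y\<^sup>2)) \<partial>lborel)"
    by (rule distributed_nn_integral[OF distributed_std_gauss_inner[OF assms(1)], symmetric]) measurable
  also have "\<dots> = ennreal (1 / sqrt (1 - 2 * l * (norm u)\<^sup>2))"
    using assms by (intro nn_integral_normal_density_exp_square) auto
  finally show ?thesis .
qed

lemma nn_integral_exp_mat_vec_sqnorm:
  fixes u :: "real ^ 'n"
  assumes "u \<noteq> 0" and "2 * l * (norm u)\<^sup>2 < 1"
  shows "(\<integral>\<^sup>+A. ennreal (exp (l * mat_vec_sqnorm d A u)) \<partial>gauss_matrix d)
           = ennreal ((1 / sqrt (1 - 2 * l * (norm u)\<^sup>2)) ^ d)"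
proof -
  interpret P: prob_space "gauss_matrix d :: (nat \<times> 'n \<Rightarrow> real) measure"
    by (rule prob_space_gauss_matrix)
  have indep: "P.indep_vars (\<lambda>_. borel)
      (\<lambda>i A. ennreal (exp (l * (\<Sum>j\<in>UNIV. A (i, j) * u $ j)\<^sup>2))) {..<d}"
    using P.indep_vars_compose2[OF indep_vars_gauss_matrix_rows,
        where Y="\<lambda>i x. ennreal (exp (l * (\<Sum>j\<in>UNIV. x j * u $ j)\<^sup>2))" and N="\<lambda>_. borel"]
    by simp
  have "(\<integral>\<^sup>+A. ennreal (exp (l * mat_vec_sqnorm d A u)) \<partial>gauss_matrix d)
      = (\<integral>\<^sup>+A. (\<Prod>i<d. ennreal (exp (l * (\<Sum>j\<in>UNIV. A (i, j) * u $ j)\<^sup>2))) \<partial>gauss_matrix d)"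
    by (simp add: mat_vec_sqnorm_def sum_distrib_left exp_sum prod_ennreal)
  also have "\<dots> = (\<Prod>i<d. \<integral>\<^sup>+A. ennreal (exp (l * (\<Sum>j\<in>UNIV. A (i, j) * u $ j)\<^sup>2)) \<partial>gauss_matrix d)"
    by (rule P.indep_vars_nn_integral[OF _ indep]) auto
  also have "\<dots> = (\<Prod>i<d. ennreal (1 / sqrt (1 - 2 * l * (norm u)\<^sup>2)))"
    using assms by (intro prod.cong nn_integral_gauss_matrix_row_exp_square) auto
  finally show ?thesis
    using assms(2) by (simp add: ennreal_power)
qed

lemma (in prob_space) prob_ge_le_exp_moment:
  assumes "s > 0" and "f \<in> borel_measurable M" and "B \<ge> 0"
    and "(\<integral>\<^sup>+x. ennreal (exp (s * f x)) \<partial>M) = ennreal B"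
  shows "prob {x\<in>space M. a \<le> f x} \<le> B * exp (- s * a)"
proof -
  have "emeasure M {x\<in>space M. a \<le> f x}
      \<le> ennreal (exp (- s * a)) * (\<integral>\<^sup>+x. ennreal (exp (s * f x)) * indicator (space M) x \<partial>M)"
    using assms(1,2) by (intro Chernoff_ineq_nn_integral_ge) auto
  also have "(\<integral>\<^sup>+x. ennreal (exp (s * f x)) * indicator (space M) x \<partial>M) = ennreal B"
    using assms(4) by (subst nn_integral_cong[where v="\<lambda>x. ennreal (exp (s * f x))"]) auto
  finally show ?thesis
    using assms(3) by (simp add: emeasure_eq_measure mult.commute flip: ennreal_mult)
qed

lemma prob_mat_vec_sqnorm_large:
  fixes u :: "real ^ 'n"
  shows "measure (gauss_matrix d) {A\<in>space (gauss_matrix d). 4 * (norm u)\<^sup>2 * d < mat_vec_sqnorm d A u}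
           \<le> exp (- 0.8 * d)"
proof (cases "u = 0")
  case True
  then show ?thesis by simp
next
  case False
  interpret P: prob_space "gauss_matrix d :: (nat \<times> 'n \<Rightarrow> real) measure"
    by (rule prob_space_gauss_matrix)
  define s where "s = 3 / (8 * (norm u)\<^sup>2)"
  have s: "s > 0" and s_u: "s * (norm u)\<^sup>2 = 3 / 8"
    using False by (simp_all add: s_def)
  have "1 - 2 * s * (norm u)\<^sup>2 = (1 / 2)\<^sup>2"
    using s_u by (simp add: algebra_simps power2_eq_square)
  then have "1 / sqrt (1 - 2 * s * (norm u)\<^sup>2) = 2"
    by simp
  then have "(\<integral>\<^sup>+A. ennreal (exp (s * mat_vec_sqnorm d A u)) \<partial>gauss_matrix d) = ennreal (2 ^ d)"
    using nn_integral_exp_mat_vec_sqnorm[OF False, of s d] s_u by simp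
  then have "P.prob {A\<in>space (gauss_matrix d). 4 * (norm u)\<^sup>2 * d \<le> mat_vec_sqnorm d A u}
      \<le> 2 ^ d * exp (- s * (4 * (norm u)\<^sup>2 * d))"
    by (intro P.prob_ge_le_exp_moment s) auto
  also have "\<dots> = exp (d * (ln 2 - 3 / 2))"
  proof -
    have "(2::real) ^ d = exp (d * ln 2)" by (simp add: exp_of_nat_mult)
    moreover have "s * (4 * (norm u)\<^sup>2 * d) = 3 / 2 * d"
      using s_u by (simp add: algebra_simps)
    ultimately show ?thesis by (simp add: mult_exp_exp algebra_simps)
  qed
  also have "\<dots> \<le> exp (- 0.8 * d)"
  proof -
    have "d * (ln 2 - 3 / 2) \<le> d * (- 0.8)"
      using ln2_le_25_over_36 by (intro mult_left_mono) auto
    then show ?thesis by (simp add: mult.commute)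
  qed
  finally show ?thesis
    by (rule order.trans[rotated], intro P.finite_measure_mono) auto
qed

lemma prob_mat_vec_sqnorm_small:
  fixes u :: "real ^ 'n"
  assumes "u \<noteq> 0" and "b > 0"
  shows "measure (gauss_matrix d) {A\<in>space (gauss_matrix d). mat_vec_sqnorm d A u \<le> b * d}
           \<le> exp (d / 2 * (1 + ln (b / (norm u)\<^sup>2)))"
proof -
  interpret P: prob_space "gauss_matrix d :: (nat \<times> 'n \<Rightarrow> real) measure"
    by (rule prob_space_gauss_matrix)
  define \<beta> where "\<beta> = b / (norm u)\<^sup>2"
  have \<beta>: "\<beta> > 0" using assms by (simp add: \<beta>_def)
  show ?thesis
  proof (cases "\<beta> < 1")
    case False
    then have "1 \<le> exp (d / 2 * (1 + ln \<beta>))" using \<beta> by simp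
    then show ?thesis using P.prob_le_1 unfolding \<beta>_def by (rule order.trans[rotated])
  next
    case True
    define s where "s = (1 / \<beta> - 1) / (2 * (norm u)\<^sup>2)"
    have s: "s > 0" using True \<beta> assms(1) by (simp add: s_def field_simps)
    have "1 - 2 * (- s) * (norm u)\<^sup>2 = 1 / \<beta>"
      using assms(1) \<beta> by (simp add: s_def field_simps)
    moreover have "2 * (- s) * (norm u)\<^sup>2 < 1"
    proof -
      have "0 \<le> s * (norm u)\<^sup>2" using s by simp
      then show ?thesis by simp
    qed
    moreover have "1 / sqrt (1 / \<beta>) = exp (ln \<beta> / 2)"
      using \<beta> by (simp add: real_sqrt_divide ln_sqrt[symmetric])
    ultimately have "(\<integral>\<^sup>+A. ennreal (exp (s * - mat_vec_sqnorm d A u)) \<partial>gauss_matrix d)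
        = ennreal (exp (ln \<beta> / 2) ^ d)"
      using nn_integral_exp_mat_vec_sqnorm[OF assms(1), of "- s" d] by simp
    then have "P.prob {A\<in>space (gauss_matrix d). - (b * d) \<le> - mat_vec_sqnorm d A u}
        \<le> exp (ln \<beta> / 2) ^ d * exp (- s * - (b * d))"
      by (intro P.prob_ge_le_exp_moment s) auto
    also have "\<dots> = exp (d / 2 * (ln \<beta> + 1 - \<beta>))"
    proof -
      have "s * b = (1 - \<beta>) / 2"
        using assms \<beta> by (simp add: s_def \<beta>_def field_simps)
      then have "- s * - (b * d) = d / 2 * (1 - \<beta>)"
        by (simp add: mult.assoc[symmetric])
      moreover have "exp (ln \<beta> / 2) ^ d = exp (d / 2 * ln \<beta>)"
        by (simp add: exp_of_nat_mult[symmetric] mult.commute)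
      ultimately show ?thesis
        by (simp add: mult_exp_exp algebra_simps)
    qed
    also have "\<dots> \<le> exp (d / 2 * (1 + ln (b / (norm u)\<^sup>2)))"
      using \<beta> by (simp add: \<beta>_def mult_left_mono)
    finally show ?thesis by simp
  qed
qed

lemma prob_mat_vec_sqnorm_large_le:
  fixes u :: "real ^ 'n"
  assumes "norm u \<le> \<delta>"
  shows "measure (gauss_matrix d) {A\<in>space (gauss_matrix d). 4 * \<delta>\<^sup>2 * d < mat_vec_sqnorm d A u}
           \<le> exp (- 0.8 * d)"
proof -
  interpret P: prob_space "gauss_matrix d :: (nat \<times> 'n \<Rightarrow> real) measure"
    by (rule prob_space_gauss_matrix)
  have "4 * (norm u)\<^sup>2 * d \<le> 4 * \<delta>\<^sup>2 * d"
    using assms by (intro mult_right_mono mult_left_mono power_mono) auto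
  then have "P.prob {A\<in>space (gauss_matrix d). 4 * \<delta>\<^sup>2 * d < mat_vec_sqnorm d A u}
      \<le> P.prob {A\<in>space (gauss_matrix d). 4 * (norm u)\<^sup>2 * d < mat_vec_sqnorm d A u}"
    by (intro P.finite_measure_mono) (auto, measurable)
  also have "\<dots> \<le> exp (- 0.8 * d)"
    by (rule prob_mat_vec_sqnorm_large)
  finally show ?thesis .
qed

lemma prob_mat_vec_sqnorm_small_le:
  fixes u :: "real ^ 'n"
  assumes "0 < \<rho>" and "\<rho> \<le> norm u" and "b > 0"
  shows "measure (gauss_matrix d) {A\<in>space (gauss_matrix d). mat_vec_sqnorm d A u \<le> b * d}
           \<le> exp (d / 2 * (1 + ln (b / \<rho>\<^sup>2)))"
proof -
  have "b / (norm u)\<^sup>2 \<le> b / \<rho>\<^sup>2"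
    using assms by (intro divide_left_mono power_mono mult_pos_pos) auto
  then have "ln (b / (norm u)\<^sup>2) \<le> ln (b / \<rho>\<^sup>2)"
    using assms by (subst ln_le_cancel_iff) (auto intro!: divide_pos_pos)
  then have "exp (d / 2 * (1 + ln (b / (norm u)\<^sup>2))) \<le> exp (d / 2 * (1 + ln (b / \<rho>\<^sup>2)))"
    by (intro exp_mono mult_left_mono) auto
  with assms show ?thesis
    by (intro order.trans[OF prob_mat_vec_sqnorm_small]) auto
qed

lemma prob_far_argmin_le:
  fixes xo c0 :: "real ^ 'n" and C :: "(real ^ 'n) set"
  assumes "finite C" and "c0 \<in> C" and "norm (xo - c0) \<le> \<delta>" and "0 < \<delta>" and "0 < \<rho>"
  shows "measure (gauss_matrix d)
           {A \<in> space (gauss_matrix d). \<exists>c \<in> argmin_set d A C xo. \<rho> \<le> norm (c - xo)}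
         \<le> exp (- 0.8 * d) + card C * exp (d / 2 * (1 + ln (4 * \<delta>\<^sup>2 / \<rho>\<^sup>2)))"
proof -
  interpret P: prob_space "gauss_matrix d :: (nat \<times> 'n \<Rightarrow> real) measure"
    by (rule prob_space_gauss_matrix)
  let ?M = "gauss_matrix d :: (nat \<times> 'n \<Rightarrow> real) measure"
  define true_looks_far where "true_looks_far = {A\<in>space ?M. 4 * \<delta>\<^sup>2 * d < mat_vec_sqnorm d A (xo - c0)}"
  define looks_near where "looks_near c = {A\<in>space ?M. mat_vec_sqnorm d A (xo - c) \<le> 4 * \<delta>\<^sup>2 * d}" for c
  define F where "F = {c\<in>C. \<rho> \<le> norm (c - xo)}"
  have events: "true_looks_far \<in> P.events" "\<And>c. looks_near c \<in> P.events"
    unfolding true_looks_far_def looks_near_def by measurable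
  have "finite F" using assms(1) by (simp add: F_def)
  have "{A \<in> space ?M. \<exists>c \<in> argmin_set d A C xo. \<rho> \<le> norm (c - xo)} \<subseteq> true_looks_far \<union> (\<Union>c\<in>F. looks_near c)"
  proof
    fix A assume "A \<in> {A \<in> space ?M. \<exists>c \<in> argmin_set d A C xo. \<rho> \<le> norm (c - xo)}"
    then obtain c where A: "A \<in> space ?M" and "c \<in> argmin_set d A C xo" and "\<rho> \<le> norm (c - xo)"
      by blast
    then have "c \<in> F" and "mat_vec_sqnorm d A (xo - c) \<le> mat_vec_sqnorm d A (xo - c0)"
      using assms(2) by (auto simp: argmin_set_def mat_vec_norm_sq F_def)
    then have "A \<in> true_looks_far \<or> A \<in> looks_near c"
      using A by (auto simp: true_looks_far_def looks_near_def)
    with \<open>c \<in> F\<close> show "A \<in> true_looks_far \<union> (\<Union>c\<in>F. looks_near c)" by blast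
  qed
  then have "P.prob {A \<in> space ?M. \<exists>c \<in> argmin_set d A C xo. \<rho> \<le> norm (c - xo)}
      \<le> P.prob (true_looks_far \<union> (\<Union>c\<in>F. looks_near c))"
    using \<open>finite F\<close> events by (intro P.finite_measure_mono sets.Un sets.finite_UN) auto
  also have "\<dots> \<le> P.prob true_looks_far + (\<Sum>c\<in>F. P.prob (looks_near c))"
    using \<open>finite F\<close> events
    by (intro order.trans[OF measure_Un_le] add_left_mono P.finite_measure_subadditive_finite) auto
  also have "P.prob true_looks_far \<le> exp (- 0.8 * d)"
    unfolding true_looks_far_def using assms(3) by (rule prob_mat_vec_sqnorm_large_le)
  also have "(\<Sum>c\<in>F. P.prob (looks_near c)) \<le> (\<Sum>c\<in>F. exp (d / 2 * (1 + ln (4 * \<delta>\<^sup>2 / \<rho>\<^sup>2))))"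
    unfolding looks_near_def using assms(4,5)
    by (intro sum_mono prob_mat_vec_sqnorm_small_le) (auto simp: F_def norm_minus_commute)
  also have "(\<Sum>c\<in>F. exp (d / 2 * (1 + ln (4 * \<delta>\<^sup>2 / \<rho>\<^sup>2)))) \<le> card C * exp (d / 2 * (1 + ln (4 * \<delta>\<^sup>2 / \<rho>\<^sup>2)))"
    using assms(1) by (simp add: F_def card_mono mult_right_mono)
  finally show ?thesis by simp
qed

lemma
  assumes "is_compression_code Q r E D"
  shows finite_codebook: "finite (codebook Q E D)"
    and card_codebook_le: "real (card (codebook Q E D)) \<le> 2 ^ r"
proof -
  have sub: "codebook Q E D \<subseteq> D ` {1..2 ^ r}"
    using assms by (auto simp: codebook_def is_compression_code_def)
  then show "finite (codebook Q E D)" by (rule finite_subset) simp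
  have "card (codebook Q E D) \<le> card (D ` {1..2 ^ r})"
    using sub by (intro card_mono) auto
  also have "\<dots> \<le> 2 ^ r"
    using card_image_le[of "{1..2 ^ r}" D] by simp
  finally show "real (card (codebook Q E D)) \<le> 2 ^ r"
    by (metis of_nat_le_iff of_nat_numeral of_nat_power)
qed

lemma norm_diff_code_le_distortion:
  assumes "bounded Q" and "is_compression_code Q r E D" and "x \<in> Q"
  shows "norm (x - D (E x)) \<le> distortion Q E D"
proof -
  obtain R where R: "\<And>x. x \<in> Q \<Longrightarrow> norm x \<le> R"
    using assms(1) by (auto simp: bounded_iff)
  obtain R' where R': "\<And>c. c \<in> D ` {1..2 ^ r} \<Longrightarrow> norm c \<le> R'"
    using finite_imp_bounded[of "D ` {1..2 ^ r}"] by (auto simp: bounded_iff)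
  have "bdd_above ((\<lambda>x. norm (x - D (E x))) ` Q)"
  proof (rule bdd_aboveI2)
    fix x assume "x \<in> Q"
    then have "norm x \<le> R" and "norm (D (E x)) \<le> R'"
      using R R' assms(2) by (auto simp: is_compression_code_def)
    then show "norm (x - D (E x)) \<le> R + R'"
      using norm_triangle_ineq4[of x "D (E x)"] by linarith
  qed
  then show ?thesis
    unfolding distortion_def using assms(3) by (rule cSUP_upper2) simp
qed

lemma ln_four_sq_div_radius_sq:
  fixes \<delta> p :: real
  assumes "\<delta> > 0"
  shows "ln (4 * \<delta>\<^sup>2 / (2 * exp (- p) * \<delta> powr (1 - p))\<^sup>2) = - 2 * p * ln (1 / (exp 1 * \<delta>))"
proof -
  have "ln (2 * exp (- p) * \<delta> powr (1 - p)) = ln 2 - p + (1 - p) * ln \<delta>"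
    using assms by (simp add: ln_mult ln_powr)
  moreover have "ln (4::real) = 2 * ln 2"
    using ln_realpow[of 2 2] by simp
  ultimately show ?thesis
    using assms by (simp add: ln_div ln_mult ln_realpow algebra_simps)
qed

lemma measurements_mult_ln:
  fixes \<delta> \<eta> \<epsilon> :: real and d r :: nat
  assumes "0 < \<delta>" and "exp 1 * \<delta> < 1"
    and "real d = \<eta> * real r / log 2 (1 / (exp 1 * \<delta>))"
  shows "d * ln (1 / (exp 1 * \<delta>)) = \<eta> * r * ln 2"
proof -
  have "ln (1 / (exp 1 * \<delta>)) > 0" using assms(1,2) by simp
  then show ?thesis using assms(3) by (simp add: log_def field_simps)
qed

lemma measurements_le:
  fixes \<delta> \<eta> \<epsilon> :: real and d r :: nat
  assumes "0 < \<delta>" and "exp 1 * \<delta> < 1"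
    and "real d = \<eta> * real r / log 2 (1 / (exp 1 * \<delta>))"
    and "\<eta> / ln (1 / (exp 1 * \<delta>)) < \<epsilon>"
  shows "d \<le> \<epsilon> * r * ln 2"
proof -
  define L where "L = ln (1 / (exp 1 * \<delta>))"
  have "L > 0" using assms(1,2) by (simp add: L_def)
  then have "\<eta> < \<epsilon> * L"
    using assms(4) by (simp add: L_def pos_divide_less_eq)
  then have "\<eta> * (r * ln 2) \<le> (\<epsilon> * L) * (r * ln 2)"
    by (intro mult_right_mono) auto
  then have "d * L \<le> (\<epsilon> * r * ln 2) * L"
    using measurements_mult_ln[OF assms(1-3)] by (simp add: L_def algebra_simps)
  then show ?thesis
    using \<open>L > 0\<close> by simp
qed

lemma union_bound_exponent_eq:
  fixes \<delta> \<eta> \<epsilon> :: real and d r :: nat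
  assumes "0 < \<delta>" and "exp 1 * \<delta> < 1" and "\<eta> \<noteq> 0"
    and "real d = \<eta> * real r / log 2 (1 / (exp 1 * \<delta>))"
  shows "d / 2 * (1 + ln (4 * \<delta>\<^sup>2 / (2 * exp (- (1 + \<epsilon>) / \<eta>) * \<delta> powr (1 - (1 + \<epsilon>) / \<eta>))\<^sup>2))
           = d / 2 - (1 + \<epsilon>) * r * ln 2"
proof -
  define p where "p = (1 + \<epsilon>) / \<eta>"
  have "ln (4 * \<delta>\<^sup>2 / (2 * exp (- (1 + \<epsilon>) / \<eta>) * \<delta> powr (1 - (1 + \<epsilon>) / \<eta>))\<^sup>2)
      = - 2 * p * ln (1 / (exp 1 * \<delta>))"
    using ln_four_sq_div_radius_sq[OF assms(1), of p] by (simp add: p_def minus_divide_left)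
  then have "d / 2 * (1 + ln (4 * \<delta>\<^sup>2 / (2 * exp (- (1 + \<epsilon>) / \<eta>) * \<delta> powr (1 - (1 + \<epsilon>) / \<eta>))\<^sup>2))
      = d / 2 - p * (d * ln (1 / (exp 1 * \<delta>)))"
    by (simp add: algebra_simps)
  also have "p * (d * ln (1 / (exp 1 * \<delta>))) = (1 + \<epsilon>) * r * ln 2"
    unfolding measurements_mult_ln[OF assms(1,2,4)] p_def using assms(3) by simp
  finally show ?thesis .
qed

lemma two_pow_mult_exp_le:
  fixes x \<epsilon> :: real
  assumes "x \<le> \<epsilon> * r * ln 2" and "0 \<le> \<epsilon>"
  shows "2 ^ r * exp (x / 2 - (1 + \<epsilon>) * r * ln 2) \<le> exp (- 0.3 * \<epsilon> * real r)"
proof -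
  have "(2::real) ^ r = exp (r * ln 2)" by (simp add: exp_of_nat_mult)
  then have "2 ^ r * exp (x / 2 - (1 + \<epsilon>) * r * ln 2) = exp (x / 2 - \<epsilon> * r * ln 2)"
    by (simp add: mult_exp_exp algebra_simps)
  also have "\<dots> \<le> exp (- 0.3 * \<epsilon> * real r)"
  proof -
    have "\<epsilon> * r * 0.6 \<le> \<epsilon> * r * ln 2"
      using ln2_ge_two_thirds assms(2) by (intro mult_left_mono) auto
    then show ?thesis using assms(1) by simp
  qed
  finally show ?thesis .
qed

theorem corollary1:
  fixes Q :: "(real ^ 'n) set" and r :: nat and E :: "real ^ 'n \<Rightarrow> nat"
    and D :: "nat \<Rightarrow> real ^ 'n" and \<delta> \<eta> \<epsilon> :: real and d :: nat
  assumes "compact Q"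
    and "is_compression_code Q r E D"
    and "\<delta> = distortion Q E D"
    and "0 < \<delta>" and "exp 1 * \<delta> < 1"
    and "\<eta> > 1"
    and "real d = \<eta> * real r / log 2 (1 / (exp 1 * \<delta>))"
    and "\<epsilon> > 0"
    and "\<eta> / ln (1 / (exp 1 * \<delta>)) < \<epsilon>"
    and "xo \<in> Q"
  shows "measure (gauss_matrix d)
           {A \<in> space (gauss_matrix d). \<exists>c \<in> argmin_set d A (codebook Q E D) xo.
              norm (c - xo) \<ge> 2 * exp (- (1 + \<epsilon>) / \<eta>) * \<delta> powr (1 - (1 + \<epsilon>) / \<eta>)}
         \<le> exp (- 0.8 * real d) + exp (- 0.3 * \<epsilon> * real r)"
proof -
  define \<rho> where "\<rho> = 2 * exp (- (1 + \<epsilon>) / \<eta>) * \<delta> powr (1 - (1 + \<epsilon>) / \<eta>)"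
  define C where "C = codebook Q E D"
  have "D (E xo) \<in> C" using assms(10) by (simp add: C_def codebook_def)
  moreover have "norm (xo - D (E xo)) \<le> \<delta>"
    using assms(1,2,3,10) by (simp add: compact_imp_bounded norm_diff_code_le_distortion)
  moreover have "\<rho> > 0" using assms(4) by (simp add: \<rho>_def)
  ultimately have "measure (gauss_matrix d) {A \<in> space (gauss_matrix d). \<exists>c \<in> argmin_set d A C xo. \<rho> \<le> norm (c - xo)}
      \<le> exp (- 0.8 * d) + card C * exp (d / 2 * (1 + ln (4 * \<delta>\<^sup>2 / \<rho>\<^sup>2)))"
    using finite_codebook[OF assms(2)] assms(4) unfolding C_def by (intro prob_far_argmin_le)
  also have "d / 2 * (1 + ln (4 * \<delta>\<^sup>2 / \<rho>\<^sup>2)) = d / 2 - (1 + \<epsilon>) * r * ln 2"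
    unfolding \<rho>_def using assms(4-7) by (intro union_bound_exponent_eq) auto
  also have "card C * exp (d / 2 - (1 + \<epsilon>) * r * ln 2) \<le> 2 ^ r * exp (d / 2 - (1 + \<epsilon>) * r * ln 2)"
    unfolding C_def by (intro mult_right_mono card_codebook_le assms(2)) simp
  also have "\<dots> \<le> exp (- 0.3 * \<epsilon> * real r)"
    using measurements_le[OF assms(4,5,7,9)] assms(8) by (intro two_pow_mult_exp_le) auto
  finally show ?thesis by (simp add: \<rho>_def C_def)
qed

end
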